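(* Let $T_n(y)$ and $U_n(y)$ denote the Chebyshev polynomials of the first and second kind, extended to all integer indices. For all $x,y,r\in\mathbb{C}$ and all integers $c,n$ with $n\ge c$ (and $x\neq0$ if $c<0$), \[ \sum_{k=c}^n r^{n-k}x^k\big(rT_k(y)+(xy-r)U_k(y)\big)=x^{n+1}y\,U_n(y)-r^{n-c+1}x^c y\,U_{c-1}(y) \] and \[ \sum_{k=c}^n r^{n-k}x^k\big((y^2-1)r\,U_{k-2}(y)+(xy-r)T_k(y)\big)=x^{n+1}y\,T_n(y)-r^{n-c+1}x^c y\,T_{c-1}(y). \]
   Context: The Chebyshev polynomials are defined by $T_0(y)=1$, $T_1(y)=y$, $T_n(y)=2yT_{n-1}(y)-T_{n-2}(y)$ and $U_0(y)=1$, $U_1(y)=2y$, $U_n(y)=2yU_{n-1}(y)-U_{n-2}(y)$ for $n\ge 2$; they are extended to negative indices so that these recurrences hold for all integers $n$ (equivalently $T_{-n}(y)=T_n(y)$ and $U_{-n}(y)=2yU_{-(n-1)}(y)-U_{-(n-2)}(y)$, so $U_{-1}(y)=0$). *)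

theory Defs
  imports Complex_Main
begin

function cheb_rec :: "complex \<Rightarrow> complex \<Rightarrow> complex \<Rightarrow> int \<Rightarrow> complex" where
  "cheb_rec a0 a1 y n =
     (if n = 0 then a0
      else if n = 1 then a1
      else if n \<ge> 2 then 2 * y * cheb_rec a0 a1 y (n - 1) - cheb_rec a0 a1 y (n - 2)
      else 2 * y * cheb_rec a0 a1 y (n + 1) - cheb_rec a0 a1 y (n + 2))"
  by pat_completeness auto
termination
  by (relation "measure (\<lambda>(a0, a1, y, n). nat (if n \<ge> 0 then 2 * n else 1 - 2 * n))") auto

definition chebT :: "int \<Rightarrow> complex \<Rightarrow> complex" where
  "chebT n y = cheb_rec 1 y y n"

definition chebU :: "int \<Rightarrow> complex \<Rightarrow> complex" where
  "chebU n y = cheb_rec 1 (2 * y) y n"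

end

theory Submission
  imports Defs
begin

text \<open>Both sums telescope. Since \<open>T k = U k - y U (k - 1)\<close>, the \<open>k\<close>-th summand of the
  first sum is \<open>r^(n - k) (A k - r A (k - 1))\<close> with \<open>A k = x^(k + 1) y U k\<close>; since
  \<open>T k = y T (k - 1) + (y^2 - 1) U (k - 2)\<close>, the same holds for the second sum with
  \<open>A k = x^(k + 1) y T k\<close>. These Chebyshev relations hold for all integers \<open>k\<close>
  because both sides solve the three-term recurrence, and a two-sided solution of it
  is determined by its values at 0 and 1.\<close>

definition cheb_recurrent :: "'a::comm_ring_1 \<Rightarrow> (int \<Rightarrow> 'a) \<Rightarrow> bool" where
  "cheb_recurrent y g \<longleftrightarrow> (\<forall>n. g n = 2 * y * g (n - 1) - g (n - 2))"

lemma cheb_recurrentD: "cheb_recurrent y g \<Longrightarrow> g n = 2 * y * g (n - 1) - g (n - 2)"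
  unfolding cheb_recurrent_def by blast

lemma cheb_recurrent_add:
  assumes "cheb_recurrent y f" and "cheb_recurrent y g"
  shows "cheb_recurrent y (\<lambda>n. f n + g n)"
  unfolding cheb_recurrent_def
proof
  fix n
  show "f n + g n = 2 * y * (f (n - 1) + g (n - 1)) - (f (n - 2) + g (n - 2))"
    by (simp add: cheb_recurrentD[OF assms(1), of n] cheb_recurrentD[OF assms(2), of n]
        algebra_simps)
qed

lemma cheb_recurrent_diff:
  assumes "cheb_recurrent y f" and "cheb_recurrent y g"
  shows "cheb_recurrent y (\<lambda>n. f n - g n)"
  unfolding cheb_recurrent_def
proof
  fix n
  show "f n - g n = 2 * y * (f (n - 1) - g (n - 1)) - (f (n - 2) - g (n - 2))"
    by (simp add: cheb_recurrentD[OF assms(1), of n] cheb_recurrentD[OF assms(2), of n]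
        algebra_simps)
qed

lemma cheb_recurrent_cmult:
  assumes "cheb_recurrent y f"
  shows "cheb_recurrent y (\<lambda>n. a * f n)"
  unfolding cheb_recurrent_def
proof
  fix n
  show "a * f n = 2 * y * (a * f (n - 1)) - a * f (n - 2)"
    by (simp add: cheb_recurrentD[OF assms, of n] algebra_simps)
qed

lemma cheb_recurrent_shift:
  assumes "cheb_recurrent y f"
  shows "cheb_recurrent y (\<lambda>n. f (n - d))"
  unfolding cheb_recurrent_def
proof
  fix n
  show "f (n - d) = 2 * y * f (n - 1 - d) - f (n - 2 - d)"
    using cheb_recurrentD[OF assms, of "n - d"] by (simp add: algebra_simps)
qed

lemma cheb_recurrent_eq_0:
  assumes rec: "cheb_recurrent y g" and g0: "g 0 = 0" and g1: "g 1 = 0"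
  shows "g n = 0"
proof -
  have nonneg: "g (int m) = 0 \<and> g (int m + 1) = 0" for m
  proof (induction m)
    case 0
    then show ?case using g0 g1 by simp
  next
    case (Suc m)
    have "g (int m + 2) = 2 * y * g (int m + 1) - g (int m)"
      using cheb_recurrentD[OF rec, of "int m + 2"] by (simp add: algebra_simps)
    with Suc show ?case by (simp add: algebra_simps)
  qed
  have neg: "g (- int m) = 0 \<and> g (1 - int m) = 0" for m
  proof (induction m)
    case 0
    then show ?case using g0 g1 by simp
  next
    case (Suc m)
    have "g (- int (Suc m)) = 2 * y * g (- int m) - g (1 - int m)"
      using cheb_recurrentD[OF rec, of "1 - int m"] by (simp add: algebra_simps)
    moreover have "1 - int (Suc m) = - int m"
      by simp
    ultimately show ?case
      using Suc by simp
  qed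
  show ?thesis
  proof (cases "n \<ge> 0")
    case True
    then show ?thesis using nonneg[of "nat n"] by simp
  next
    case False
    then show ?thesis using neg[of "nat (- n)"] by simp
  qed
qed

lemma cheb_recurrent_cheb_rec: "cheb_recurrent y (cheb_rec a0 a1 y)"
  unfolding cheb_recurrent_def
proof
  fix n
  show "cheb_rec a0 a1 y n = 2 * y * cheb_rec a0 a1 y (n - 1) - cheb_rec a0 a1 y (n - 2)"
  proof (cases "n \<ge> 2")
    case True
    then show ?thesis by (subst cheb_rec.simps) simp
  next
    case False
    then have "cheb_rec a0 a1 y (n - 2) = 2 * y * cheb_rec a0 a1 y (n - 1) - cheb_rec a0 a1 y n"
      by (subst cheb_rec.simps) simp
    then show ?thesis by simp
  qed
qed

lemma cheb_recurrent_chebT: "cheb_recurrent y (\<lambda>n. chebT n y)"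
  unfolding chebT_def by (rule cheb_recurrent_cheb_rec)

lemma cheb_recurrent_chebU: "cheb_recurrent y (\<lambda>n. chebU n y)"
  unfolding chebU_def by (rule cheb_recurrent_cheb_rec)

lemma chebT_0 [simp]: "chebT 0 y = 1"
  and chebT_1 [simp]: "chebT 1 y = y"
  and chebT_minus_1 [simp]: "chebT (- 1) y = y"
  and chebU_0 [simp]: "chebU 0 y = 1"
  and chebU_1 [simp]: "chebU 1 y = 2 * y"
  and chebU_minus_1 [simp]: "chebU (- 1) y = 0"
  and chebU_minus_2 [simp]: "chebU (- 2) y = - 1"
  unfolding chebT_def chebU_def by (subst cheb_rec.simps; simp)+

lemmas cheb_recurrent_intros =
  cheb_recurrent_add cheb_recurrent_diff cheb_recurrent_cmult cheb_recurrent_shift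
  cheb_recurrent_chebT cheb_recurrent_chebU

lemma chebT_eq_chebU_diff: "chebT k y = chebU k y - y * chebU (k - 1) y"
proof -
  let ?g = "\<lambda>k. chebT k y - chebU k y + y * chebU (k - 1) y"
  have "cheb_recurrent y ?g"
    by (intro cheb_recurrent_intros)
  then have "?g k = 0"
    by (rule cheb_recurrent_eq_0) simp_all
  then show ?thesis by (simp add: algebra_simps)
qed

lemma chebT_eq_chebT_chebU: "chebT k y = y * chebT (k - 1) y + (y\<^sup>2 - 1) * chebU (k - 2) y"
proof -
  let ?g = "\<lambda>k. chebT k y - y * chebT (k - 1) y - (y\<^sup>2 - 1) * chebU (k - 2) y"
  have "cheb_recurrent y ?g"
    by (intro cheb_recurrent_intros)
  then have "?g k = 0"
    by (rule cheb_recurrent_eq_0) (simp_all add: algebra_simps power2_eq_square)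
  then show ?thesis by (simp add: algebra_simps)
qed

lemma chebU_telescoping_term:
  "r * chebT k y + (x * y - r) * chebU k y = x * y * chebU k y - r * y * chebU (k - 1) y"
  by (simp add: chebT_eq_chebU_diff[of k y] algebra_simps)

lemma chebT_telescoping_term:
  "(y\<^sup>2 - 1) * r * chebU (k - 2) y + (x * y - r) * chebT k y
     = x * y * chebT k y - r * y * chebT (k - 1) y"
  by (simp only: chebT_eq_chebT_chebU[of k y]) (simp add: algebra_simps)

lemma sum_weighted_telescope:
  fixes A :: "int \<Rightarrow> 'a::comm_ring_1"
  assumes "c \<le> n"
  shows "(\<Sum>k\<in>{c..n}. r ^ nat (n - k) * (A k - r * A (k - 1)))
         = A n - r ^ nat (n - c + 1) * A (c - 1)"
  using assms
proof (induction n rule: int_ge_induct)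
  case base
  then show ?case by simp
next
  case (step m)
  have weights: "r ^ nat (m + 1 - k) = r * r ^ nat (m - k)" if "k \<le> m" for k
  proof -
    have "nat (m + 1 - k) = Suc (nat (m - k))"
      using that by auto
    then show ?thesis by simp
  qed
  have "{c..m + 1} = insert (m + 1) {c..m}"
    using step.hyps by auto
  then have "(\<Sum>k\<in>{c..m + 1}. r ^ nat (m + 1 - k) * (A k - r * A (k - 1)))
      = (A (m + 1) - r * A m) + r * (\<Sum>k\<in>{c..m}. r ^ nat (m - k) * (A k - r * A (k - 1)))"
    by (simp add: weights sum_distrib_left mult.assoc)
  also have "\<dots> = A (m + 1) - r * (r ^ nat (m - c + 1) * A (c - 1))"
    by (subst step.IH) (simp add: algebra_simps)
  also have "\<dots> = A (m + 1) - r ^ nat (m + 1 - c + 1) * A (c - 1)"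
    using weights[of "c - 1"] step.hyps by (simp add: algebra_simps)
  finally show ?case .
qed

theorem theorem11:
  fixes x y r :: complex and c n :: int
  assumes "n \<ge> c" and "c < 0 \<longrightarrow> x \<noteq> 0"
  shows "(\<Sum>k\<in>{c..n}. r ^ nat (n - k) * x powi k *
            (r * chebT k y + (x * y - r) * chebU k y))
           = x powi (n + 1) * y * chebU n y - r ^ nat (n - c + 1) * x powi c * y * chebU (c - 1) y \<and>
         (\<Sum>k\<in>{c..n}. r ^ nat (n - k) * x powi k *
            ((y^2 - 1) * r * chebU (k - 2) y + (x * y - r) * chebT k y))
           = x powi (n + 1) * y * chebT n y - r ^ nat (n - c + 1) * x powi c * y * chebT (c - 1) y"
proof -
  \<comment> \<open>fails for \<open>x = 0, k = -1\<close> since \<open>0 powi -1 = 0\<close>; hence the hypothesis on \<open>c < 0\<close>\<close>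
  have powi_succ: "x powi (k + 1) = x powi k * x" if "k \<in> {c..n}" for k
    using that assms(2) by (intro power_int_add_1) auto
  define A where "A k = x powi (k + 1) * y * chebU k y" for k
  define B where "B k = x powi (k + 1) * y * chebT k y" for k
  have sum_U: "(\<Sum>k\<in>{c..n}. r ^ nat (n - k) * x powi k * (r * chebT k y + (x * y - r) * chebU k y))
      = (\<Sum>k\<in>{c..n}. r ^ nat (n - k) * (A k - r * A (k - 1)))"
    by (intro sum.cong refl)
      (simp only: chebU_telescoping_term, simp add: A_def powi_succ algebra_simps)
  have sum_T: "(\<Sum>k\<in>{c..n}. r ^ nat (n - k) * x powi k *
        ((y^2 - 1) * r * chebU (k - 2) y + (x * y - r) * chebT k y))
      = (\<Sum>k\<in>{c..n}. r ^ nat (n - k) * (B k - r * B (k - 1)))"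
    by (intro sum.cong refl)
      (simp only: chebT_telescoping_term, simp add: B_def powi_succ algebra_simps)
  show ?thesis
    unfolding sum_U sum_T sum_weighted_telescope[OF assms(1)]
    by (simp add: A_def B_def algebra_simps)
qed

end
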